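(* Let $0\le\alpha<n$, $m$ a nonnegative integer, $0<\eta\le1$, $0<\delta<\min\{\eta,(n-\alpha)/m\}$, $\tilde\alpha=m\delta+\alpha$. For every $1\le r\le\infty$ and every $\tilde\delta\le\min\{\delta,\tilde\alpha-n/r\}$, excluding the case $\tilde\delta=\delta$ when $\tilde\alpha-n/r=\delta$, there exists a pair of weights $(w,v)$ with $v$ not identically zero such that $(w,v)\in\mathbb{H}(r,\tilde\alpha,\tilde\delta)$.
   Context: A weight is a nonnegative locally integrable function; $w(B)=\int_Bw$; $x_B$ the center of $B$; $r'$ the conjugate exponent. $(w,v)\in\mathbb{H}(r,\tilde\alpha,\tilde\delta)$ means that for some $C$ and every ball $B$: if $1<r\le\infty$, $|B|^{(\delta-\tilde\delta)/n}\big(\int\frac{v^{r'}(y)}{(|B|^{1/n}+|x_B-y|)^{r'(n-\tilde\alpha+\delta)}}dy\big)^{1/r'}\le C\frac{w(B)}{|B|}$; if $r=1$, $|B|^{(\delta-\tilde\delta)/n}\big\|\frac{v(\cdot)}{(|B|^{1/n}+|x_B-\cdot|)^{n-\tilde\alpha+\delta}}\big\|_\infty\le C\frac{w(B)}{|B|}$. If $m=0$, $(n-\alpha)/m$ is read as $+\infty$. *)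

theory Defs
  imports "HOL-Analysis.Analysis" "HOL-Probability.Essential_Supremum"
begin

definition weight :: "('a::euclidean_space \<Rightarrow> real) \<Rightarrow> bool" where
  "weight w \<longleftrightarrow> w \<in> borel_measurable lebesgue \<and> (\<forall>x. 0 \<le> w x) \<and>
     (\<forall>x r. set_integrable lebesgue (cball x r) w)"

definition wmeas :: "('a::euclidean_space \<Rightarrow> real) \<Rightarrow> 'a \<Rightarrow> real \<Rightarrow> real" where
  "wmeas w x t = (LINT y:ball x t|lebesgue. w y)"

definition bvol :: "'a::euclidean_space \<Rightarrow> real \<Rightarrow> real" where
  "bvol x t = measure lebesgue (ball x t)"

text \<open>conjugate exponent r' of r \<in> [1,\<infinity>] (used only for 1 < r)\<close>
definition conj_exp :: "ereal \<Rightarrow> real" where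
  "conj_exp r = (if r = \<infinity> then 1 else real_of_ereal r / (real_of_ereal r - 1))"

definition n_over :: "real \<Rightarrow> ereal \<Rightarrow> real" where
  "n_over n r = (if r = \<infinity> then 0 else n / real_of_ereal r)"

text \<open>The condition (w,v) \<in> H(r, \<alpha>~, \<delta>~), with the parameter \<delta> made explicit.\<close>
definition H_cond :: "ereal \<Rightarrow> real \<Rightarrow> real \<Rightarrow> real \<Rightarrow>
    ('a::euclidean_space \<Rightarrow> real) \<Rightarrow> ('a \<Rightarrow> real) \<Rightarrow> bool" where
  "H_cond r a dt d w v \<longleftrightarrow>
    (let n = real DIM('a) in
     \<exists>C::real. \<forall>x t. t > 0 \<longrightarrow>
       (if r = 1 then
          (let S = esssup lebesgue
                (\<lambda>y. ereal (v y / (bvol x t powr (1/n) + norm (x - y)) powr (n - a + d)))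
           in S < \<infinity> \<and>
              bvol x t powr ((d - dt)/n) * real_of_ereal S \<le> C * wmeas w x t / bvol x t)
        else
          (let p = conj_exp r;
               I = (\<integral>\<^sup>+ y. ennreal (v y powr p /
                      (bvol x t powr (1/n) + norm (x - y)) powr (p * (n - a + d))) \<partial>lebesgue)
           in I < \<infinity> \<and>
              bvol x t powr ((d - dt)/n) * enn2real I powr (1/p) \<le> C * wmeas w x t / bvol x t)))"

end

theory Submission
  imports Defs
begin

(* The witnesses are v = indicator of the unit ball and w y = 1 + |y|^K with K = max 0
   \<lceil>\<alpha>~ - n - \<delta>~\<rceil>. Put s = |B|^(1/n) and \<beta> = n - \<alpha>~ + \<delta>. Since 0 \<le> v \<le> 1, the kernel is at most
   s^-\<beta>, so the left-hand side of the condition is O(s^(\<alpha>~ - n - \<delta>~)) on every ball; on large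
   balls this is dominated by the average of w, which is at least 1 + (t/2)^K/2 on a ball of
   radius t. On small balls with r > 1 the r'-th power of the kernel norm is the potential
   \<integral>_{|y|<1} (s + |x - y|)^-q with q = r' \<beta>; splitting |x - y| into dyadic shells around x
   bounds it by C s^-(r' (\<delta> - \<delta>~)) precisely when \<delta>~ \<le> \<alpha>~ - n/r, except at q = n, where the
   dyadic sum grows like log (1/s): this is the excluded case \<delta>~ = \<delta> = \<alpha>~ - n/r. *)

section \<open>Balls and weights\<close>

lemma sets_lebesgue_ball [measurable]: "ball (x::'a::euclidean_space) r \<in> sets lebesgue"
  by (intro sets_completionI_sets) simp

lemma emeasure_lebesgue_ball:
  "0 \<le> r \<Longrightarrow> emeasure lebesgue (ball (x::'a::euclidean_space) r) = ennreal (unit_ball_vol DIM('a) * r ^ DIM('a))"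
  using emeasure_ball[of r x] by simp

lemma unit_ball_vol_neq_0 [simp]: "0 \<le> n \<Longrightarrow> unit_ball_vol n \<noteq> 0"
  using unit_ball_vol_pos[of n] by linarith

lemma bvol_eq: "0 \<le> t \<Longrightarrow> bvol (x::'a::euclidean_space) t = unit_ball_vol DIM('a) * t ^ DIM('a)"
  unfolding bvol_def using content_ball[of t x] by simp

lemma bvol_pos: "0 < t \<Longrightarrow> 0 < bvol (x::'a::euclidean_space) t"
  by (simp add: bvol_eq)

lemma bvol_root:
  assumes "0 < t"
  shows "bvol (x::'a::euclidean_space) t powr (1 / DIM('a)) = unit_ball_vol DIM('a) powr (1 / DIM('a)) * t"
  using assms by (simp add: bvol_eq powr_mult powr_realpow[symmetric] powr_powr)

lemma weight_continuous:
  fixes w :: "'a::euclidean_space \<Rightarrow> real"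
  assumes "continuous_on UNIV w" "\<And>x. 0 \<le> w x"
  shows "weight w"
  unfolding weight_def
proof (intro conjI allI)
  show "w \<in> borel_measurable lebesgue"
    using borel_measurable_continuous_onI[OF assms(1)] by (intro measurable_completion) simp
  show "0 \<le> w x" for x
    by (rule assms(2))
  fix x :: 'a and r :: real
  obtain a where a: "cball x r \<subseteq> cbox (-a) a"
    using bounded_subset_cbox_symmetric[OF bounded_cball] by metis
  have "w absolutely_integrable_on cbox (-a) a"
    using assms(1) by (intro absolutely_integrable_continuous) (auto intro: continuous_on_subset)
  then show "set_integrable lebesgue (cball x r) w"
    by (rule set_integrable_subset) (use a in auto)
qed

lemma weight_indicator:
  fixes S :: "'a::euclidean_space set"
  assumes "S \<in> sets lebesgue"
  shows "weight (indicator S :: 'a \<Rightarrow> real)"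
  unfolding weight_def
proof (intro conjI allI)
  show "indicator S \<in> borel_measurable lebesgue"
    using assms by measurable
  fix x :: 'a and r :: real
  show "0 \<le> (indicator S x :: real)"
    by simp
  have "emeasure lebesgue (cball x r \<inter> S) \<le> emeasure lebesgue (cball x r)"
    by (intro emeasure_mono) auto
  also have "\<dots> < \<infinity>"
    using emeasure_bounded_finite[of "cball x r"] by simp
  finally have "integrable lebesgue (indicator (cball x r \<inter> S) :: 'a \<Rightarrow> real)"
    using assms by (intro integrable_real_indicator) auto
  then show "set_integrable lebesgue (cball x r) (indicator S :: 'a \<Rightarrow> real)"
    by (simp add: set_integrable_def indicator_inter_arith[symmetric])
qed

lemma not_AE_indicator_eq_0:
  assumes "S \<in> sets M" "emeasure M S \<noteq> 0"
  shows "\<not> (AE y in M. indicator S y = (0::real))"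
proof
  assume "AE y in M. indicator S y = (0::real)"
  moreover have "{y \<in> space M. indicator S y \<noteq> (0::real)} = S"
    using sets.sets_into_space[OF assms(1)] by (auto simp: indicator_def)
  ultimately show False
    using AE_iff_measurable[of S M "\<lambda>y. indicator S y = (0::real)"] assms by auto
qed

lemma weight_indicator_unit_ball:
  "weight (indicator (ball (0::'a::euclidean_space) 1) :: 'a \<Rightarrow> real)"
  "\<not> (AE y in lebesgue. indicator (ball (0::'a) 1) y = (0::real))"
proof -
  show "weight (indicator (ball (0::'a) 1) :: 'a \<Rightarrow> real)"
    by (rule weight_indicator[OF sets_lebesgue_ball])
  show "\<not> (AE y in lebesgue. indicator (ball (0::'a) 1) y = (0::real))"
    by (rule not_AE_indicator_eq_0[OF sets_lebesgue_ball], subst emeasure_lebesgue_ball) auto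
qed

lemma bvol_half_le_measure_ball_diff:
  fixes x :: "'a::euclidean_space"
  assumes t: "0 < t"
  shows "bvol x t / 2 \<le> measure lebesgue (ball x t - ball 0 (t / 2))"
proof -
  have "(2::real) ^ 1 \<le> 2 ^ DIM('a)"
    by (intro power_increasing) (auto simp: Suc_leI)
  then have "bvol x t / 2 ^ DIM('a) \<le> bvol x t / 2"
    using bvol_pos[OF t, of x] by (intro divide_left_mono) auto
  moreover have "bvol (0::'a) (t / 2) = bvol x t / 2 ^ DIM('a)"
    using t by (simp add: bvol_eq power_divide)
  moreover have "bvol x t - bvol (0::'a) (t / 2) \<le> measure lebesgue (ball x t - ball 0 (t / 2))"
    unfolding bvol_def by (intro measure_diff_le_measure_setdiff) auto
  ultimately show ?thesis
    by linarith
qed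

definition power_weight :: "nat \<Rightarrow> 'a::real_normed_vector \<Rightarrow> real" where
  "power_weight K y = 1 + norm y ^ K"

lemma weight_power_weight: "weight (power_weight K :: 'a::euclidean_space \<Rightarrow> real)"
  unfolding power_weight_def by (intro weight_continuous continuous_intros) auto

lemma power_weight_average_ge:
  fixes x :: "'a::euclidean_space"
  assumes t: "0 < t"
  shows "1 + (t / 2) ^ K / 2 \<le> wmeas (power_weight K) x t / bvol x t"
proof -
  let ?B = "ball x t" and ?Z = "ball (0::'a) (t / 2)" and ?c = "(t / 2) ^ K"
  have "set_integrable lebesgue ?B (power_weight K)"
    using weight_power_weight[of K] unfolding weight_def
    by (meson set_integrable_subset ball_subset_cball sets_lebesgue_ball)
  then have int_w: "integrable lebesgue (\<lambda>y. indicator ?B y * power_weight K y)"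
    by (simp add: set_integrable_def)
  have "?B \<in> lmeasurable" "?B - ?Z \<in> lmeasurable"
    by (auto intro: fmeasurable_Diff)
  then have int_B: "integrable lebesgue (indicator ?B :: 'a \<Rightarrow> real)"
    and int_BZ: "integrable lebesgue (indicator (?B - ?Z) :: 'a \<Rightarrow> real)"
    by (auto simp: fmeasurable_def)
  have "indicator ?B y + ?c * indicator (?B - ?Z) y \<le> indicator ?B y * power_weight K y" for y
  proof -
    have "?c \<le> norm y ^ K" if "y \<notin> ?Z"
      using that t by (intro power_mono) auto
    then show ?thesis
      by (auto simp: indicator_def power_weight_def)
  qed
  then have "integral\<^sup>L lebesgue (\<lambda>y. indicator ?B y + ?c * indicator (?B - ?Z) y)
      \<le> wmeas (power_weight K) x t"
    unfolding wmeas_def set_lebesgue_integral_def real_scaleR_def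
    using int_w int_B int_BZ by (intro integral_mono Bochner_Integration.integrable_add integrable_mult_right)
  then have "measure lebesgue ?B + ?c * measure lebesgue (?B - ?Z) \<le> wmeas (power_weight K) x t"
    using int_B int_BZ by simp
  have "bvol x t / 2 \<le> measure lebesgue (?B - ?Z)"
    by (rule bvol_half_le_measure_ball_diff[OF t])
  then have "?c * (bvol x t / 2) \<le> ?c * measure lebesgue (?B - ?Z)"
    using t by (intro mult_left_mono) auto
  with \<open>measure lebesgue ?B + ?c * measure lebesgue (?B - ?Z) \<le> wmeas (power_weight K) x t\<close>
  have "bvol x t * (1 + ?c / 2) \<le> wmeas (power_weight K) x t"
    unfolding bvol_def by (simp add: algebra_simps)
  then show ?thesis
    using bvol_pos[OF t, of x] by (simp add: le_divide_eq mult.commute)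
qed

lemma le_power_weight_average:
  fixes L :: "'a::euclidean_space \<Rightarrow> real \<Rightarrow> real" and e :: real
  assumes small: "\<And>x t. 0 < t \<Longrightarrow> bvol x t powr (1 / DIM('a)) \<le> 1 \<Longrightarrow> L x t \<le> C0"
    and large: "\<And>x t. 0 < t \<Longrightarrow> 1 < bvol x t powr (1 / DIM('a)) \<Longrightarrow>
      L x t \<le> C1 * (bvol x t powr (1 / DIM('a))) powr e"
    and C1: "0 \<le> C1"
  obtains C where "\<And>x t. 0 < t \<Longrightarrow> L x t \<le> C * wmeas (power_weight (nat \<lceil>e\<rceil>)) x t / bvol x t"
proof -
  define K where "K = nat \<lceil>e\<rceil>"
  have K: "e \<le> real K"
    unfolding K_def by linarith
  define c where "c = unit_ball_vol DIM('a) powr (1 / DIM('a))"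
  have c: "0 < c"
    unfolding c_def by simp
  define C where "C = \<bar>C0\<bar> + C1 * (2 * c) ^ K * 2"
  have C: "\<bar>C0\<bar> \<le> C" "C1 * (2 * c) ^ K * 2 \<le> C"
    unfolding C_def using C1 c by auto
  show ?thesis
  proof (rule that)
    fix x :: 'a and t :: real
    assume t: "0 < t"
    define A where "A = wmeas (power_weight K) x t / bvol x t"
    have "0 \<le> (t / 2) ^ K"
      using t by simp
    then have A: "1 \<le> A" "(t / 2) ^ K \<le> 2 * A"
      using power_weight_average_ge[OF t, of K x] unfolding A_def by linarith+
    have root: "bvol x t powr (1 / DIM('a)) = c * t"
      unfolding c_def using bvol_root[OF t] .
    have "L x t \<le> C * A"
    proof (cases "c * t \<le> 1")
      case True
      then have "L x t \<le> \<bar>C0\<bar> * 1"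
        using small[of t x] t root by force
      also have "\<dots> \<le> C * A"
        using A C by (intro mult_mono) auto
      finally show ?thesis .
    next
      case False
      have "L x t \<le> C1 * (c * t) powr e"
        using large[of t x] t root False by simp
      also have "\<dots> \<le> C1 * (c * t) powr real K"
        using False C1 K by (intro mult_left_mono powr_mono) auto
      also have "\<dots> = C1 * (2 * c) ^ K * (t / 2) ^ K"
        using c t by (simp add: powr_realpow power_mult_distrib power_divide)
      also have "\<dots> \<le> C1 * (2 * c) ^ K * (2 * A)"
        using A C1 c by (intro mult_left_mono) auto
      also have "\<dots> \<le> C * A"
        using mult_right_mono[OF C(2), of A] A(1) by (simp add: mult_ac)
      finally show ?thesis .
    qed
    then show "L x t \<le> C * wmeas (power_weight (nat \<lceil>e\<rceil>)) x t / bvol x t"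
      by (simp add: A_def K_def)
  qed
qed

section \<open>Dyadic estimates of the unit ball potential\<close>

lemma dyadic_shell_exists:
  fixes s d :: real
  assumes "0 < s" "0 \<le> d" "s + d < 2 ^ N * s"
  shows "\<exists>k<N. 2 ^ k * s \<le> s + d \<and> s + d < 2 ^ Suc k * s"
proof -
  obtain k where k: "\<not> s + d < 2 ^ k * s" "s + d < 2 ^ Suc k * s"
    using exists_least_lemma[of "\<lambda>k. s + d < 2 ^ k * s"] assms by auto
  have "2 ^ k * s < 2 ^ N * s"
    using k(1) assms(3) by linarith
  then have "k < N"
    using assms(1) by simp
  with k show ?thesis by auto
qed

lemma dyadic_scale_exists:
  fixes s :: real
  assumes "0 < s" "s \<le> 1"
  obtains N where "1 < 2 ^ N * s" "2 ^ N * s \<le> 2"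
proof -
  obtain M where "1 / s < 2 ^ M"
    using real_arch_pow[of 2 "1 / s"] by auto
  then have "1 < 2 ^ M * s"
    using assms(1) by (simp add: field_simps)
  then obtain k where "\<not> 1 < 2 ^ k * s" "1 < 2 ^ Suc k * s"
    using exists_least_lemma[of "\<lambda>k. 1 < 2 ^ k * s"] assms(2) by auto
  then show ?thesis
    by (intro that[of "Suc k"]) auto
qed

lemma kernel_le_dyadic_sum:
  fixes x y :: "'a::real_normed_vector"
  assumes "0 < s" "0 \<le> q"
  shows "indicator A y * (s + norm (x - y)) powr (-q)
    \<le> (\<Sum>k<N. (2 ^ k * s) powr (-q) * indicator (ball x (2 ^ Suc k * s)) y)
      + (2 ^ N * s) powr (-q) * indicator A y"
proof (cases "y \<in> A \<and> s + norm (x - y) < 2 ^ N * s")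
  case True
  then obtain k where k: "k < N" "2 ^ k * s \<le> s + norm (x - y)" "s + norm (x - y) < 2 ^ Suc k * s"
    using dyadic_shell_exists[of s "norm (x - y)" N] assms by auto
  have "(s + norm (x - y)) powr (-q) \<le> (2 ^ k * s) powr (-q)"
    using k(2) assms by (intro powr_mono2') auto
  also have "\<dots> = (2 ^ k * s) powr (-q) * indicator (ball x (2 ^ Suc k * s)) y"
    using k(3) assms(1) by (simp add: dist_norm indicator_def)
  also have "\<dots> \<le> (\<Sum>k<N. (2 ^ k * s) powr (-q) * indicator (ball x (2 ^ Suc k * s)) y)"
    using k(1) by (intro member_le_sum) auto
  finally show ?thesis
    using True by (simp add: add_increasing2)
next
  case False
  have "(s + norm (x - y)) powr (-q) \<le> (2 ^ N * s) powr (-q)" if "y \<in> A"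
    using False that assms by (intro powr_mono2') auto
  then have "indicator A y * (s + norm (x - y)) powr (-q) \<le> (2 ^ N * s) powr (-q) * indicator A y"
    by (simp add: indicator_def)
  also have "\<dots> \<le> (\<Sum>k<N. (2 ^ k * s) powr (-q) * indicator (ball x (2 ^ Suc k * s)) y)
      + (2 ^ N * s) powr (-q) * indicator A y"
    by (intro le_add_same_cancel2[THEN iffD2] sum_nonneg) simp
  finally show ?thesis .
qed

lemma dyadic_powr_eq: "0 < s \<Longrightarrow> (2 ^ k * s :: real) powr a = s powr a * (2 powr a) ^ k"
  by (simp add: powr_mult powr_power powr_powr mult.commute powr_realpow[symmetric])

lemma sum_dyadic_powr_le_neg:
  fixes s a :: real
  assumes "0 < s" "a < 0"
  shows "(\<Sum>k<N. (2 ^ k * s) powr a) \<le> s powr a / (1 - 2 powr a)"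
proof -
  have ratio: "2 powr a < 1"
    using assms(2) by (simp add: powr_less_one)
  have "(\<Sum>k<N. (2 ^ k * s) powr a) = s powr a * ((1 - (2 powr a) ^ N) / (1 - 2 powr a))"
    using assms ratio by (simp add: dyadic_powr_eq sum_distrib_left[symmetric] sum_gp_strict)
  also have "\<dots> \<le> s powr a * (1 / (1 - 2 powr a))"
    using ratio by (intro mult_left_mono divide_right_mono) auto
  finally show ?thesis
    by simp
qed

lemma sum_dyadic_powr_le_pos:
  fixes s a D :: real
  assumes "0 < s" "2 ^ N * s \<le> 2" "0 \<le> D" "0 < a + D"
  shows "(\<Sum>k<N. (2 ^ k * s) powr a) \<le> 2 powr (a + D) / (2 powr (a + D) - 1) * s powr (-D)"
proof -
  let ?b = "a + D"
  have ratio: "1 < 2 powr ?b"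
    using assms(4) by simp
  have "(2 ^ k * s) powr a \<le> (2 ^ k * s) powr ?b * s powr (-D)" for k
  proof -
    have "(2 ^ k * s) powr (-D) \<le> s powr (-D)"
      using assms(1,3) by (intro powr_mono2') auto
    moreover have "(2 ^ k * s) powr a = (2 ^ k * s) powr ?b * (2 ^ k * s) powr (-D)"
      by (simp add: flip: powr_add)
    ultimately show ?thesis
      by (simp add: mult_left_mono)
  qed
  then have "(\<Sum>k<N. (2 ^ k * s) powr a) \<le> (\<Sum>k<N. (2 ^ k * s) powr ?b) * s powr (-D)"
    by (simp add: sum_distrib_right sum_mono)
  moreover have "(\<Sum>k<N. (2 ^ k * s) powr ?b) \<le> 2 powr ?b / (2 powr ?b - 1)"
  proof -
    have "(\<Sum>k<N. (2 ^ k * s) powr ?b) = s powr ?b * (\<Sum>k<N. (2 powr ?b) ^ k)"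
      using assms(1) by (simp add: dyadic_powr_eq sum_distrib_left)
    also have "(\<Sum>k<N. (2 powr ?b) ^ k) = ((2 powr ?b) ^ N - 1) / (2 powr ?b - 1)"
      using ratio assms(4) by (simp add: sum_gp_strict) (simp add: field_simps)
    also have "s powr ?b * (((2 powr ?b) ^ N - 1) / (2 powr ?b - 1))
        \<le> s powr ?b * (2 powr ?b) ^ N / (2 powr ?b - 1)"
      using ratio by (simp add: divide_right_mono mult_left_mono flip: times_divide_eq_right)
    also have "s powr ?b * (2 powr ?b) ^ N = (2 ^ N * s) powr ?b"
      by (simp only: dyadic_powr_eq[OF assms(1)])
    also have "(2 ^ N * s) powr ?b \<le> 2 powr ?b"
      using assms by (intro powr_mono2) auto
    finally show ?thesis
      using ratio by (simp add: divide_right_mono)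
  qed
  ultimately show ?thesis
    by (meson order_trans mult_right_mono powr_ge_zero)
qed

(* For v the indicator of the unit ball v^p = v, so the integral in H(r, \<alpha>~, \<delta>~) is this
   potential at s = |B|^(1/n) and q = r' (n - \<alpha>~ + \<delta>). *)
lemma sum_dyadic_powr_le:
  fixes a D :: real
  assumes "0 \<le> D" "-D \<le> a" "a = -D \<Longrightarrow> a < 0"
  obtains G where "0 \<le> G"
    "\<And>s N. 0 < s \<Longrightarrow> 2 ^ N * s \<le> 2 \<Longrightarrow> (\<Sum>k<N. (2 ^ k * s) powr a) \<le> G * s powr (-D)"
proof (cases "a = -D")
  case True
  with assms(3) have "a < 0" "2 powr a < 1"
    by (auto simp: powr_less_one)
  then show ?thesis
    using True sum_dyadic_powr_le_neg[of _ a] by (intro that[of "1 / (1 - 2 powr a)"]) auto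
next
  case False
  with assms(2) have "1 < 2 powr (a + D)"
    by simp
  then have "0 \<le> 2 powr (a + D) / (2 powr (a + D) - 1)"
    by (simp add: less_imp_le)
  with False show ?thesis
    using assms(1,2) sum_dyadic_powr_le_pos[of _ _ D a]
    by (intro that[of "2 powr (a + D) / (2 powr (a + D) - 1)"]) auto
qed

definition unit_ball_potential :: "'a::euclidean_space \<Rightarrow> real \<Rightarrow> real \<Rightarrow> ennreal" where
  "unit_ball_potential x s q =
     (\<integral>\<^sup>+ y. ennreal (indicator (ball 0 1) y * (s + norm (x - y)) powr (-q)) \<partial>lebesgue)"

lemma unit_ball_potential_le_dyadic:
  fixes x :: "'a::euclidean_space" and s q :: real
  assumes s: "0 < s" and q: "0 \<le> q"
  shows "unit_ball_potential x s q \<le> ennreal (unit_ball_vol DIM('a) *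
    (2 ^ DIM('a) * (\<Sum>k<N. (2 ^ k * s) powr (real DIM('a) - q)) + (2 ^ N * s) powr (-q)))"
proof -
  let ?c = "\<lambda>k. (2 ^ k * s) powr (-q)" and ?B = "\<lambda>k. ball x (2 ^ Suc k * s)"
  have "unit_ball_potential x s q \<le> (\<integral>\<^sup>+ y. (\<Sum>k<N. ennreal (?c k) * indicator (?B k) y)
      + ennreal (?c N) * indicator (ball 0 1) y \<partial>lebesgue)"
    unfolding unit_ball_potential_def
  proof (rule nn_integral_mono)
    fix y :: 'a
    have "ennreal (indicator (ball 0 1) y * (s + norm (x - y)) powr (-q))
      \<le> ennreal ((\<Sum>k<N. ?c k * indicator (?B k) y) + ?c N * indicator (ball 0 1) y)"
      using kernel_le_dyadic_sum[OF s q] by (rule ennreal_leI)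
    then show "ennreal (indicator (ball 0 1) y * (s + norm (x - y)) powr (-q))
      \<le> (\<Sum>k<N. ennreal (?c k) * indicator (?B k) y) + ennreal (?c N) * indicator (ball 0 1) y"
      by (simp add: ennreal_plus sum_nonneg ennreal_mult' ennreal_indicator flip: sum_ennreal)
  qed
  also have "\<dots> = (\<Sum>k<N. ennreal (?c k) * emeasure lebesgue (?B k))
      + ennreal (?c N) * emeasure lebesgue (ball (0::'a) 1)"
    by (subst nn_integral_add, measurable, subst nn_integral_sum, measurable)
      (simp only: nn_integral_cmult_indicator sets_lebesgue_ball)
  also have "\<dots> = ennreal (unit_ball_vol DIM('a) *
      (2 ^ DIM('a) * (\<Sum>k<N. (2 ^ k * s) powr (real DIM('a) - q)) + (2 ^ N * s) powr (-q)))"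
  proof -
    have "?c k * (unit_ball_vol DIM('a) * (2 ^ Suc k * s) ^ DIM('a))
        = unit_ball_vol DIM('a) * 2 ^ DIM('a) * (2 ^ k * s) powr (real DIM('a) - q)" for k
      using s by (simp add: powr_diff powr_minus powr_realpow power_mult_distrib field_simps)
    then have "ennreal (?c k) * emeasure lebesgue (?B k)
        = ennreal (unit_ball_vol DIM('a) * 2 ^ DIM('a) * (2 ^ k * s) powr (real DIM('a) - q))" for k
      using s by (subst emeasure_lebesgue_ball) (simp_all flip: ennreal_mult')
    moreover have "ennreal (?c N) * emeasure lebesgue (ball (0::'a) 1)
        = ennreal (unit_ball_vol DIM('a) * (2 ^ N * s) powr (-q))"
      by (subst emeasure_lebesgue_ball) (simp_all add: mult.commute flip: ennreal_mult')
    ultimately show ?thesis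
      by (simp add: sum_distrib_left distrib_left mult.assoc sum_ennreal sum_nonneg
          flip: ennreal_plus)
  qed
  finally show ?thesis .
qed

lemma unit_ball_potential_le:
  fixes x :: "'a::euclidean_space" and s q :: real
  assumes "0 < s" "0 \<le> q"
  shows "unit_ball_potential x s q \<le> ennreal (unit_ball_vol DIM('a) * s powr (-q))"
  using unit_ball_potential_le_dyadic[OF assms, of x 0] by simp

lemma unit_ball_potential_le_small:
  fixes q D :: real
  assumes "0 \<le> q" "0 \<le> D" "q - DIM('a) \<le> D"
    and "q - DIM('a) = D \<Longrightarrow> DIM('a) < q" \<comment> \<open>excludes q = n, D = 0: the logarithmic case\<close>
  obtains C where "0 \<le> C"
    "\<And>(x::'a::euclidean_space) s. 0 < s \<Longrightarrow> s \<le> 1 \<Longrightarrow>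
       unit_ball_potential x s q \<le> ennreal (C * s powr (-D))"
proof -
  let ?a = "real DIM('a) - q"
  have "-D \<le> ?a" "?a = -D \<Longrightarrow> ?a < 0"
    using assms(3,4) by auto
  then obtain G where G: "0 \<le> G"
    "\<And>s N. 0 < s \<Longrightarrow> 2 ^ N * s \<le> 2 \<Longrightarrow> (\<Sum>k<N. (2 ^ k * s) powr ?a) \<le> G * s powr (-D)"
    by (rule sum_dyadic_powr_le[OF assms(2)]) auto
  show ?thesis
  proof (rule that)
    show "0 \<le> unit_ball_vol DIM('a) * (2 ^ DIM('a) * G + 1)"
      using G(1) by simp
    fix x :: 'a and s :: real
    assume s: "0 < s" "s \<le> 1"
    obtain N where N: "1 < 2 ^ N * s" "2 ^ N * s \<le> 2"
      using dyadic_scale_exists[OF s] .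
    have "(2 ^ N * s) powr (-q) \<le> 1"
      using powr_mono2'[of "-q" 1 "2 ^ N * s"] N(1) assms(1) by simp
    moreover have "1 \<le> s powr (-D)"
      using s assms(2) by (simp add: powr_minus_divide powr_le1)
    moreover have "2 ^ DIM('a) * (\<Sum>k<N. (2 ^ k * s) powr ?a) \<le> 2 ^ DIM('a) * (G * s powr (-D))"
      by (intro mult_left_mono G(2) s(1) N(2)) simp
    ultimately have "2 ^ DIM('a) * (\<Sum>k<N. (2 ^ k * s) powr ?a) + (2 ^ N * s) powr (-q)
        \<le> (2 ^ DIM('a) * G + 1) * s powr (-D)"
      unfolding distrib_right mult.assoc mult_1_left by linarith
    then have "unit_ball_vol DIM('a) * (2 ^ DIM('a) * (\<Sum>k<N. (2 ^ k * s) powr ?a) + (2 ^ N * s) powr (-q))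
        \<le> unit_ball_vol DIM('a) * (2 ^ DIM('a) * G + 1) * s powr (-D)"
      by (simp add: mult.assoc mult_left_mono)
    with unit_ball_potential_le_dyadic[OF s(1) assms(1), of x N]
    show "unit_ball_potential x s q \<le> ennreal (unit_ball_vol DIM('a) * (2 ^ DIM('a) * G + 1) * s powr (-D))"
      by (meson ennreal_leI order_trans)
  qed
qed

section \<open>The condition H for the indicator of the unit ball\<close>

lemma measurable_unit_ball_kernel:
  "(\<lambda>y. ereal (indicator (ball 0 1) y / (s + norm ((x::'a::euclidean_space) - y)) powr b))
     \<in> borel_measurable lebesgue"
proof -
  have [measurable]: "(\<lambda>y. s + norm (x - y)) \<in> borel_measurable borel" "ball (0::'a) 1 \<in> sets borel"
    by (auto intro: borel_measurable_continuous_onI continuous_intros)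
  have "(\<lambda>y. ereal (indicator (ball 0 1) y / (s + norm (x - y)) powr b)) \<in> borel_measurable borel"
    by measurable
  then show ?thesis
    by (intro measurable_completion) simp
qed

lemma H_cond_indicator_ball_r_eq_1:
  fixes a d dt :: real
  assumes "0 < DIM('a) - a + d" "dt \<le> a - DIM('a)"
  shows "H_cond 1 a dt d (power_weight (nat \<lceil>a - DIM('a) - dt\<rceil>))
    (indicator (ball (0::'a::euclidean_space) 1))"
proof -
  let ?n = "real DIM('a)"
  define \<beta> where "\<beta> = ?n - a + d"
  let ?r = "\<lambda>x t. bvol (x::'a) t powr (1 / ?n)"
  define S where "S x t = esssup lebesgue
    (\<lambda>y. ereal (indicator (ball 0 1) y / (?r x t + norm (x - y)) powr \<beta>))" for x t
  define L where "L x t = bvol x t powr ((d - dt) / ?n) * real_of_ereal (S x t)" for x t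
  have S_le: "S x t \<le> ereal (?r x t powr (- \<beta>))" if t: "0 < t" for x t
    unfolding S_def
  proof (intro esssup_I AE_I2)
    fix y :: 'a
    have "(?r x t + norm (x - y)) powr (- \<beta>) \<le> ?r x t powr (- \<beta>)"
      using assms(1) bvol_pos[OF t, of x] by (intro powr_mono2') (auto simp: \<beta>_def)
    then show "ereal (indicator (ball 0 1) y / (?r x t + norm (x - y)) powr \<beta>) \<le> ereal (?r x t powr (- \<beta>))"
      unfolding powr_minus_divide by (simp add: indicator_def)
  qed (rule measurable_unit_ball_kernel)
  have L_le: "L x t \<le> 1 * ?r x t powr (a - ?n - dt)" if t: "0 < t" for x t
  proof -
    have "real_of_ereal (S x t) \<le> ?r x t powr (- \<beta>)"
      using S_le[OF t, of x] by (cases "S x t") auto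
    then have "L x t \<le> ?r x t powr (d - dt) * ?r x t powr (- \<beta>)"
      unfolding L_def by (simp add: powr_powr mult_left_mono)
    then show ?thesis
      by (simp add: \<beta>_def flip: powr_add)
  qed
  obtain C where C: "\<And>x t. 0 < t \<Longrightarrow> L x t \<le> C * wmeas (power_weight (nat \<lceil>a - ?n - dt\<rceil>)) x t / bvol x t"
  proof (rule le_power_weight_average[of L 1 1])
    show "L x t \<le> 1" if "0 < t" "?r x t \<le> 1" for x t
      using L_le[OF that(1), of x] powr_le1[of "a - ?n - dt" "?r x t"] that assms(2) by simp
  qed (use L_le in auto)
  show ?thesis
    unfolding H_cond_def Let_def if_P[OF refl] \<beta>_def[symmetric] S_def[symmetric] L_def[symmetric]
  proof (intro exI allI impI conjI)
    fix x :: 'a and t :: real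
    assume t: "0 < t"
    show "S x t < \<infinity>"
      using S_le[OF t, of x] by (rule order.strict_trans1) simp
    show "L x t \<le> C * wmeas (power_weight (nat \<lceil>a - ?n - dt\<rceil>)) x t / bvol x t"
      by (rule C[OF t])
  qed
qed

lemma conj_exp_pos: "1 < r \<Longrightarrow> 0 < conj_exp r"
  by (cases r) (auto simp: conj_exp_def)

lemma conj_exp_mult_n_over: "1 < r \<Longrightarrow> conj_exp r * (n - n_over n r) = n"
  by (cases r) (auto simp: conj_exp_def n_over_def field_simps)

lemma powr_mult_root_powr:
  fixes K u p c z :: real
  assumes "0 \<le> K" "0 < u" "0 < p"
  shows "u powr c * (K * u powr (- (p * z))) powr (1 / p) = K powr (1 / p) * u powr (c - z)"
  using assms by (simp add: powr_mult powr_powr powr_add[symmetric])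

lemma conj_exp_potential_exponents:
  fixes n a d dt :: real and r :: ereal
  assumes r: "1 < r" and \<beta>: "0 < n - a + d"
    and dt: "dt \<le> d" "dt \<le> a - n_over n r" "\<not> (dt = d \<and> a - n_over n r = d)"
  defines "q \<equiv> conj_exp r * (n - a + d)" and "D \<equiv> conj_exp r * (d - dt)"
  shows "0 \<le> q" "0 \<le> D" "q - n \<le> D" "q - n = D \<Longrightarrow> n < q"
proof -
  let ?p = "conj_exp r"
  have p: "0 < ?p" "?p * (n - n_over n r) = n"
    using r by (simp_all add: conj_exp_pos conj_exp_mult_n_over)
  show "0 \<le> q" "0 \<le> D"
    unfolding q_def D_def using p \<beta> dt by simp_all
  have excess: "q - n - D = ?p * (n_over n r - a + dt)"
    unfolding q_def D_def using p(2) by (simp add: algebra_simps)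
  have "?p * (n_over n r - a + dt) \<le> 0"
    using p(1) dt(2) by (intro mult_nonneg_nonpos) auto
  then show "q - n \<le> D"
    using excess by linarith
  assume "q - n = D"
  then have "dt = a - n_over n r"
    using excess p(1) by simp
  then have "0 < D"
    unfolding D_def using p(1) dt(1,3) by auto
  then show "n < q"
    using \<open>q - n = D\<close> by linarith
qed

lemma nn_integral_indicator_ball_kernel:
  fixes x :: "'a::euclidean_space" and s p z :: real
  assumes "0 < p" "0 < s"
  shows "(\<integral>\<^sup>+ y. ennreal (indicator (ball 0 1) y powr p / (s + norm (x - y)) powr (p * z)) \<partial>lebesgue)
    = unit_ball_potential x s (p * z)"
  unfolding unit_ball_potential_def using assms
  by (intro nn_integral_cong) (simp add: indicator_def powr_minus_divide)

lemma H_cond_indicator_ball_r_gt_1: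
  fixes a d dt :: real and r :: ereal
  assumes r: "1 < r" and \<beta>_pos: "0 < DIM('a) - a + d"
    and dt: "dt \<le> d" "dt \<le> a - n_over DIM('a) r" "\<not> (dt = d \<and> a - n_over DIM('a) r = d)"
  shows "H_cond r a dt d (power_weight (nat \<lceil>a - DIM('a) - dt\<rceil>))
    (indicator (ball (0::'a::euclidean_space) 1))"
proof -
  let ?n = "real DIM('a)" and ?\<omega> = "unit_ball_vol DIM('a)"
  let ?r = "\<lambda>x t. bvol (x::'a) t powr (1 / ?n)"
  define p where "p = conj_exp r"
  define \<beta> where "\<beta> = ?n - a + d"
  define q where "q = p * \<beta>"
  define D where "D = p * (d - dt)"
  have p: "0 < p"
    unfolding p_def using r by (rule conj_exp_pos)
  note exponents = conj_exp_potential_exponents[OF r \<beta>_pos dt, folded p_def \<beta>_def, folded q_def D_def]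
  obtain C0 where C0: "0 \<le> C0"
    "\<And>(x::'a) s. 0 < s \<Longrightarrow> s \<le> 1 \<Longrightarrow> unit_ball_potential x s q \<le> ennreal (C0 * s powr (-D))"
    using unit_ball_potential_le_small[OF exponents] by blast
  define I where "I x t = (\<integral>\<^sup>+ y. ennreal (indicator (ball 0 1) y powr p
    / (?r x t + norm (x - y)) powr (p * \<beta>)) \<partial>lebesgue)" for x t
  define L where "L x t = bvol x t powr ((d - dt) / ?n) * enn2real (I x t) powr (1 / p)" for x t
  have I_eq: "I x t = unit_ball_potential x (?r x t) q" if "0 < t" for x t
    unfolding I_def q_def using p bvol_pos[OF that, of x] by (intro nn_integral_indicator_ball_kernel) auto
  have I_le: "I x t \<le> ennreal (?\<omega> * ?r x t powr (-q))" if "0 < t" for x t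
    unfolding I_eq[OF that] using bvol_pos[OF that, of x] exponents(1) by (intro unit_ball_potential_le) auto
  have L_le: "L x t \<le> K powr (1 / p) * ?r x t powr (d - dt - z)"
    if "0 < t" "0 \<le> K" "enn2real (I x t) \<le> K * ?r x t powr (- (p * z))" for x t K z
  proof -
    have "L x t \<le> ?r x t powr (d - dt) * (K * ?r x t powr (- (p * z))) powr (1 / p)"
      unfolding L_def using that(3) p by (simp add: powr_powr mult_left_mono powr_mono2)
    then show ?thesis
      using that(2) bvol_pos[OF that(1), of x] p by (simp add: powr_mult_root_powr)
  qed
  obtain C where C: "\<And>x t. 0 < t \<Longrightarrow> L x t \<le> C * wmeas (power_weight (nat \<lceil>a - ?n - dt\<rceil>)) x t / bvol x t"
  proof (rule le_power_weight_average[of L "C0 powr (1 / p)" "?\<omega> powr (1 / p)"])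
    fix x :: 'a and t :: real
    assume t: "0 < t"
    have "enn2real (I x t) \<le> ?\<omega> * ?r x t powr (- (p * \<beta>))"
      using I_le[OF t, of x] by (intro enn2real_leI) (auto simp: q_def)
    then have "L x t \<le> ?\<omega> powr (1 / p) * ?r x t powr (d - dt - \<beta>)"
      using L_le[of t ?\<omega> x \<beta>] t by simp
    then show "L x t \<le> ?\<omega> powr (1 / p) * ?r x t powr (a - ?n - dt)"
      by (simp add: \<beta>_def)
    assume "?r x t \<le> 1"
    then have "unit_ball_potential x (?r x t) q \<le> ennreal (C0 * ?r x t powr (- (p * (d - dt))))"
      using C0(2) bvol_pos[OF t, of x] by (simp add: D_def)
    then have "enn2real (I x t) \<le> C0 * ?r x t powr (- (p * (d - dt)))"
      using C0(1) by (intro enn2real_leI) (auto simp: I_eq[OF t])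
    then show "L x t \<le> C0 powr (1 / p)"
      using L_le[of t C0 x "d - dt"] t C0(1) bvol_pos[OF t, of x] by simp
  qed auto
  have "r \<noteq> 1"
    using r by auto
  show ?thesis
    unfolding H_cond_def Let_def if_not_P[OF \<open>r \<noteq> 1\<close>] p_def[symmetric] \<beta>_def[symmetric]
      I_def[symmetric] L_def[symmetric]
  proof (intro exI allI impI conjI)
    fix x :: 'a and t :: real
    assume t: "0 < t"
    show "I x t < \<infinity>"
      using I_le[OF t, of x] by (rule order.strict_trans1) simp
    show "L x t \<le> C * wmeas (power_weight (nat \<lceil>a - ?n - dt\<rceil>)) x t / bvol x t"
      by (rule C[OF t])
  qed
qed

theorem theorem3p10:
  fixes \<alpha> \<eta> \<delta> :: real and m :: nat
  assumes "0 \<le> \<alpha>" "\<alpha> < real DIM('a::euclidean_space)"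
    and "0 < \<eta>" "\<eta> \<le> 1"
    and "0 < \<delta>" "\<delta> < \<eta>"
    and "m > 0 \<longrightarrow> \<delta> < (real DIM('a) - \<alpha>) / real m"
  shows "\<forall>(r::ereal) (dt::real). 1 \<le> r \<longrightarrow>
           dt \<le> \<delta> \<longrightarrow> dt \<le> (real m * \<delta> + \<alpha>) - n_over (real DIM('a)) r \<longrightarrow>
           \<not> (dt = \<delta> \<and> (real m * \<delta> + \<alpha>) - n_over (real DIM('a)) r = \<delta>) \<longrightarrow>
           (\<exists>(w::'a \<Rightarrow> real) v. weight w \<and> weight v \<and> \<not> (AE y in lebesgue. v y = 0) \<and>
              H_cond r (real m * \<delta> + \<alpha>) dt \<delta> w v)"
proof (intro allI impI)
  fix r :: ereal and dt :: real
  assume r: "1 \<le> r" and dt: "dt \<le> \<delta>" "dt \<le> (real m * \<delta> + \<alpha>) - n_over DIM('a) r"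
    "\<not> (dt = \<delta> \<and> (real m * \<delta> + \<alpha>) - n_over DIM('a) r = \<delta>)"
  have "real m * \<delta> < real DIM('a) - \<alpha>"
    using assms(2,7) by (cases "m = 0") (auto simp: field_simps)
  then have \<beta>_pos: "0 < real DIM('a) - (real m * \<delta> + \<alpha>) + \<delta>"
    using assms(5) by simp
  have "H_cond r (real m * \<delta> + \<alpha>) dt \<delta>
      (power_weight (nat \<lceil>real m * \<delta> + \<alpha> - DIM('a) - dt\<rceil>)) (indicator (ball (0::'a) 1))"
  proof (cases "r = 1")
    case True
    then show ?thesis
      using H_cond_indicator_ball_r_eq_1[OF \<beta>_pos] dt(2) by (simp add: n_over_def)
  next
    case False
    then show ?thesis
      using H_cond_indicator_ball_r_gt_1[OF _ \<beta>_pos dt] r by simp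
  qed
  then show "\<exists>(w::'a \<Rightarrow> real) v. weight w \<and> weight v \<and> \<not> (AE y in lebesgue. v y = 0) \<and>
      H_cond r (real m * \<delta> + \<alpha>) dt \<delta> w v"
    using weight_power_weight weight_indicator_unit_ball by blast
qed

end
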